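(* Let $m\ge 1$ and let $L$ be either $L'$ or $\mathcal{R}^*$ (notation as in the context). If $a\in\mathcal{R}$ satisfies $Tr(ax)=0$ for all $x\in L$, then $a=0$.
   Context: Let $R=\mathbb{F}_3+u\mathbb{F}_3+u^2\mathbb{F}_3$ with $u^3=1$, i.e. $R=\mathbb{F}_3[u]/(u^3-1)$. For a positive integer $m$, let $\mathcal{R}=\mathbb{F}_{3^m}+u\mathbb{F}_{3^m}+u^2\mathbb{F}_{3^m}=\mathbb{F}_{3^m}[u]/(u^3-1)$. Every element of $\mathcal{R}$ can be written uniquely as $x_1+x_2(u-1)+x_3(u-1)^2$ with $x_1,x_2,x_3\in\mathbb{F}_{3^m}$; it is a unit iff $x_1\neq 0$, and $\mathcal{R}^*$ denotes the group of units. Define $Tr:\mathcal{R}\to R$ by $Tr(a+ub+u^2c)=tr(a)+u\,tr(b)+u^2tr(c)$ for $a,b,c\in\mathbb{F}_{3^m}$, where $tr$ is the absolute trace from $\mathbb{F}_{3^m}$ to $\mathbb{F}_3$. Let $\mathcal{Q}$ be the set of nonzero squares of $\mathbb{F}_{3^m}$ and $L'=\{x_1+x_2(u-1)+x_3(u-1)^2: x_1\in\mathcal{Q},\ x_2,x_3\in\mathbb{F}_{3^m}\}$, a subgroup of index $2$ of $\mathcal{R}^*$. *)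

theory Defs
  imports Main
begin

text \<open>The ring F[u]/(u^3-1) over a field F (here F = F_{3^m}); an element
  a + u b + u^2 c is represented by the coordinate triple (a, b, c).\<close>

type_synonym 'a R3 = "'a \<times> 'a \<times> 'a"

definition radd :: "'a::field R3 \<Rightarrow> 'a R3 \<Rightarrow> 'a R3" where
  "radd x y = (case x of (a,b,c) \<Rightarrow> case y of (d,e,f) \<Rightarrow> (a+d, b+e, c+f))"

text \<open>Multiplication using u^3 = 1.\<close>
definition rmul :: "'a::field R3 \<Rightarrow> 'a R3 \<Rightarrow> 'a R3" where
  "rmul x y = (case x of (a,b,c) \<Rightarrow> case y of (d,e,f) \<Rightarrow>
      (a*d + b*f + c*e, a*e + b*d + c*f, a*f + b*e + c*d))"

definition rzero :: "'a::field R3" where "rzero = (0,0,0)"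
definition rone :: "'a::field R3" where "rone = (1,0,0)"
definition ru :: "'a::field R3" where "ru = (0,1,0)"
definition rof :: "'a::field \<Rightarrow> 'a R3" where "rof c = (c,0,0)"

definition rv :: "'a::field R3" where "rv = radd ru (rof (-1))"

definition from_basis :: "'a::field \<Rightarrow> 'a \<Rightarrow> 'a \<Rightarrow> 'a R3" where
  "from_basis x1 x2 x3 = radd (rof x1) (radd (rmul (rof x2) rv) (rmul (rof x3) (rmul rv rv)))"

definition runits :: "'a::field R3 set" where
  "runits = {x. \<exists>y. rmul x y = rone}"

definition sqs :: "'a::field set" where
  "sqs = {y. \<exists>x. x \<noteq> 0 \<and> y = x^2}"

definition Lprime :: "'a::field R3 set" where
  "Lprime = {from_basis x1 x2 x3 | x1 x2 x3. x1 \<in> sqs}"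

text \<open>Absolute trace F_{3^m} \<rightarrow> F_3 (the prime field sits inside the field).\<close>
definition tr :: "nat \<Rightarrow> 'a::field \<Rightarrow> 'a" where
  "tr m x = (\<Sum>i<m. x ^ (3^i))"

definition Tr :: "nat \<Rightarrow> 'a::field R3 \<Rightarrow> 'a R3" where
  "Tr m x = (case x of (a,b,c) \<Rightarrow> (tr m a, tr m b, tr m c))"

end

theory Submission
  imports Defs "HOL-Number_Theory.Residues" "HOL-Computational_Algebra.Polynomial"
begin

text \<open>It suffices to test against the scalars \<open>(s, 0, 0)\<close> with \<open>s\<close> a nonzero square, which lie
  in both \<open>L'\<close> and \<open>\<R>\<^sup>*\<close>: then \<open>Tr(a x) = 0\<close> says that each coordinate \<open>\<alpha>\<close> of \<open>a\<close> satisfies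
  \<open>tr(\<alpha> s) = 0\<close> for all nonzero squares \<open>s\<close>. In odd characteristic every element is a difference
  of two squares, so by additivity of the trace \<open>tr(\<alpha> y) = 0\<close> for all \<open>y\<close>; since \<open>tr\<close> is a
  nonzero polynomial of degree \<open>3\<^sup>m\<^sup>-\<^sup>1 < 3\<^sup>m\<close> it is not identically zero, which forces \<open>\<alpha> = 0\<close>.\<close>

lemma CHAR_eq_prime_if_card_prime_power:
  fixes p :: nat
  assumes "prime p" "m \<ge> 1" "card (UNIV :: 'a::{finite,field} set) = p ^ m"
  shows "CHAR('a) = p"
proof -
  have "prime CHAR('a)"
    by (rule prime_CHAR_semidom) (simp add: finite_imp_CHAR_pos)
  moreover have "CHAR('a) dvd p ^ m"
    using CHAR_dvd_CARD[where 'a='a] assms(3) by simp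
  ultimately have "CHAR('a) dvd p"
    using prime_dvd_power by blast
  with \<open>prime CHAR('a)\<close> \<open>prime p\<close> show ?thesis
    by (simp add: primes_dvd_imp_eq)
qed

lemma tr_zero: "tr m (0::'a::field) = 0"
  unfolding tr_def by (simp add: power_0_left)

lemma tr_add:
  assumes "CHAR('a) = 3"
  shows "tr m (x + y :: 'a::field) = tr m x + tr m y"
  unfolding tr_def using assms by (simp add: freshmans_dream' sum.distrib)

lemma tr_uminus: "tr m (- x :: 'a::field) = - tr m x"
  unfolding tr_def by (simp add: power_minus_odd sum_negf)

lemma tr_diff:
  assumes "CHAR('a) = 3"
  shows "tr m (x - y :: 'a::field) = tr m x - tr m y"
  using tr_add[OF assms, of m x "- y"] by (simp add: tr_uminus)

lemma tr_not_identically_zero: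
  assumes "m \<ge> 1" "card (UNIV :: 'a::{finite,field} set) = 3 ^ m"
  shows "\<exists>y. tr m y \<noteq> (0::'a)"
proof (rule ccontr)
  assume "\<nexists>y. tr m y \<noteq> (0::'a)"
  define P :: "'a poly" where "P = (\<Sum>i<m. monom 1 (3 ^ i))"
  have poly_P: "poly P x = tr m x" for x
    by (simp add: P_def tr_def poly_sum poly_monom)
  have "coeff P (3 ^ (m - 1)) = (\<Sum>i\<in>{m - 1}. 1)"
    unfolding P_def coeff_sum coeff_monom
    using assms(1) by (intro sum.mono_neutral_cong_right) auto
  then have "P \<noteq> 0" by auto
  have "degree P \<le> 3 ^ (m - 1)"
    unfolding P_def
    by (intro degree_sum_le) (auto intro!: order.trans[OF degree_monom_le] power_increasing)
  moreover have "{x. poly P x = 0} = UNIV"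
    using \<open>\<nexists>y. tr m y \<noteq> 0\<close> poly_P by auto
  ultimately have "card (UNIV :: 'a set) \<le> 3 ^ (m - 1)"
    using card_poly_roots_bound[OF \<open>P \<noteq> 0\<close>] by simp
  moreover have "(3::nat) ^ (m - 1) < 3 ^ m"
    using assms(1) by simp
  ultimately show False
    using assms(2) by linarith
qed

lemma eq_diff_squares:
  fixes y :: "'a::field"
  assumes "(2::'a) \<noteq> 0"
  shows "y = ((y + 1) / 2) ^ 2 - ((y - 1) / 2) ^ 2"
proof -
  have "((y + 1) / 2) ^ 2 - ((y - 1) / 2) ^ 2 = ((y + 1) ^ 2 - (y - 1) ^ 2) / 2 ^ 2"
    by (simp only: power_divide flip: diff_divide_distrib)
  also have "(y + 1) ^ 2 - (y - 1) ^ 2 = 2 ^ 2 * y"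
    by (simp add: power2_eq_square algebra_simps)
  finally show ?thesis
    using assms by (metis nonzero_mult_div_cancel_left power_not_zero)
qed

lemma tr_mult_sqs_eq_zero_imp_zero:
  fixes \<alpha> :: "'a::{finite,field}"
  assumes "m \<ge> 1" "card (UNIV :: 'a set) = 3 ^ m"
    and tr_sqs: "\<And>s. s \<in> sqs \<Longrightarrow> tr m (\<alpha> * s) = 0"
  shows "\<alpha> = 0"
proof (rule ccontr)
  assume "\<alpha> \<noteq> 0"
  have char: "CHAR('a) = 3"
    using CHAR_eq_prime_if_card_prime_power[of 3] assms(1,2) by simp
  then have "(2::'a) \<noteq> 0"
    using of_nat_eq_0_iff_char_dvd[of 2, where 'a='a] by simp
  have tr_sq: "tr m (\<alpha> * x ^ 2) = 0" for x
    using tr_sqs[of "x ^ 2"] by (cases "x = 0") (auto simp: sqs_def tr_zero)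
  have tr_all: "tr m (\<alpha> * y) = 0" for y
    by (subst eq_diff_squares[OF \<open>2 \<noteq> 0\<close>, of y])
       (simp add: right_diff_distrib tr_diff[OF char] tr_sq)
  obtain y :: 'a where "tr m y \<noteq> 0"
    using tr_not_identically_zero assms(1,2) by blast
  with tr_all[of "y / \<alpha>"] \<open>\<alpha> \<noteq> 0\<close> show False
    by simp
qed

lemma rof_sqs_mem:
  assumes "s \<in> sqs" "L = Lprime \<or> L = runits"
  shows "rof s \<in> L"
  using assms(2)
proof
  assume "L = Lprime"
  have "rof s = from_basis s 0 0"
    by (simp add: from_basis_def radd_def rmul_def rof_def rv_def ru_def)
  with assms(1) \<open>L = Lprime\<close> show ?thesis
    unfolding Lprime_def by blast
next
  assume "L = runits"
  have "s \<noteq> 0"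
    using assms(1) by (auto simp: sqs_def)
  then have "rmul (rof s) (rof (1 / s)) = rone"
    by (simp add: rmul_def rof_def rone_def)
  with \<open>L = runits\<close> show ?thesis
    unfolding runits_def by blast
qed

theorem lemma3p1:
  fixes a :: "'a::{finite,field} R3" and m :: nat and L :: "'a R3 set"
  assumes "m \<ge> 1"
    and "card (UNIV :: 'a set) = 3 ^ m"
    and "L = Lprime \<or> L = runits"
    and "\<forall>x\<in>L. Tr m (rmul a x) = rzero"
  shows "a = rzero"
proof -
  obtain a0 a1 a2 where a: "a = (a0, a1, a2)"
    by (cases a) auto
  have "tr m (a0 * s) = 0 \<and> tr m (a1 * s) = 0 \<and> tr m (a2 * s) = 0" if "s \<in> sqs" for s
  proof -
    have "Tr m (rmul a (rof s)) = rzero"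
      using assms(4) rof_sqs_mem[OF that assms(3)] by blast
    then show ?thesis
      by (simp add: a rmul_def rof_def Tr_def rzero_def)
  qed
  then have "a0 = 0" "a1 = 0" "a2 = 0"
    using tr_mult_sqs_eq_zero_imp_zero[OF assms(1,2)] by blast+
  then show ?thesis
    by (simp add: a rzero_def)
qed

end
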